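(* Let $N\geq2$ and $[\![N]\!]=\{1,\dots,N\}$. Let $x_1,\dots,x_N$ and $A_I$ ($I\subset[\![N]\!]$) be indeterminates, and let $K$ be the field of rational functions in them over $\mathbb{Q}$. For $k\in[\![N]\!]$ let $E_k$ be the map sending a tuple $(y_1,\dots,y_N)\in K^N$ with $y_k\neq0$ to $(y_1,\dots,y_{k-1},\overline{y_k},y_{k+1},\dots,y_N)$, where $$\overline{y_k}=\Big(\sum_{i\neq k}y_i^2+\sum_{I\subset[\![N]\!]\smallsetminus\{k\}}A_I\prod_{i\in I}y_i\Big)\Big/y_k .$$ Let $G$ be the group generated by the involutions $E_1,\dots,E_N$ acting (birationally) in this way. Then for every $g\in G$, each coordinate of $g\cdot(x_1,\dots,x_N)$ is a polynomial with integer coefficients in the variables $x_1^{\pm1},\dots,x_N^{\pm1}$ and $\{A_I\}_{I\subsetneq[\![N]\!]}$, the coefficients depending only on $g$.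
   Context: The maps $E_k$ are the birational involutions of $\mathbb{C}^N$ exchanging the two roots, in the $k$-th variable, of the Markoff-type equation $\sum_{i=1}^N X_i^2+\sum_{I\subset[\![N]\!]}A_I\prod_{i\in I}X_i=0$ (monic of degree $2$ in each variable); $G$ is the free product of $N$ copies of $\mathbb{Z}/2\mathbb{Z}$ acting through them. Note that $A_{[\![N]\!]}$ does not appear in the formula for any $E_k$. *)

theory Defs
  imports Complex_Main "HOL-Library.Poly_Mapping" "HOL-Library.List_Lexorder"
    "HOL-Library.Product_Lexorder" "HOL-Computational_Algebra.Fraction_Field"
begin

(* The pair/list encoding is only used so that the
   variable type is linearly ordered, which makes the polynomial ring an idom. *)
type_synonym var = "bool \<times> nat list"

definition xv :: "nat \<Rightarrow> var" where
  "xv i = (True, [i])"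

definition av :: "nat set \<Rightarrow> var" where
  "av I = (False, sorted_list_of_set I)"

type_synonym qpoly = "(var \<Rightarrow>\<^sub>0 nat) \<Rightarrow>\<^sub>0 rat"
type_synonym zpoly = "(var \<Rightarrow>\<^sub>0 nat) \<Rightarrow>\<^sub>0 int"

type_synonym K = "qpoly fract"

definition Var :: "var \<Rightarrow> K" where
  "Var v = Fract (Poly_Mapping.single (Poly_Mapping.single v 1) 1) 1"

definition zpoly_to_K :: "zpoly \<Rightarrow> K" where
  "zpoly_to_K P = Fract (Poly_Mapping.map (of_int :: int \<Rightarrow> rat) P) 1"

definition allowed_vars :: "nat \<Rightarrow> var set" where
  "allowed_vars N = xv ` {1..N} \<union> av ` {I. I \<subset> {1..N}}"

definition is_int_laurent :: "nat \<Rightarrow> K \<Rightarrow> bool" where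
  "is_int_laurent N c \<longleftrightarrow>
     (\<exists>(P :: zpoly) (m :: nat \<Rightarrow> nat).
        (\<forall>\<mu> \<in> Poly_Mapping.keys P. Poly_Mapping.keys \<mu> \<subseteq> allowed_vars N) \<and>
        c = zpoly_to_K P / (\<Prod>i\<in>{1..N}. Var (xv i) ^ m i))"

definition E :: "nat \<Rightarrow> nat \<Rightarrow> (nat \<Rightarrow> K) \<Rightarrow> (nat \<Rightarrow> K)" where
  "E N k y = y(k := ((\<Sum>i\<in>{1..N} - {k}. y i ^ 2)
                    + (\<Sum>I\<in>Pow ({1..N} - {k}). Var (av I) * (\<Prod>i\<in>I. y i))) / y k)"

definition act :: "nat \<Rightarrow> nat list \<Rightarrow> (nat \<Rightarrow> K) \<Rightarrow> (nat \<Rightarrow> K)" where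
  "act N ks y = foldr (E N) ks y"

definition generic_point :: "nat \<Rightarrow> K" where
  "generic_point i = Var (xv i)"

end

theory Submission imports Defs begin

(* The coefficient A_[N] occurs in the Markoff-type equation F = 0 but in none of the E_k,
   so it may be specialised to the Laurent polynomial
     A_[N] := -(\<Sum>i x_i^2 + \<Sum>_{I proper} A_I \<Prod>_{i\<in>I} x_i) / (x_1 \<cdots> x_N),
   which puts the generic point on the hypersurface F = 0.  As a polynomial in y_k, F is monic
   quadratic with linear coefficient L_k independent of y_k and constant term C_k, and
   E_k replaces y_k by C_k / y_k.  On the hypersurface Vieta's formulas give
   C_k / y_k = - y_k - L_k, the other root: so every E_k preserves the hypersurface as well
   as the Laurent property of the coordinates, and the theorem follows by induction on the word. *)

lemma lookup_map_of_int:
  "Poly_Mapping.lookup (Poly_Mapping.map (of_int :: int \<Rightarrow> 'b::ring_1) p) k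
     = of_int (Poly_Mapping.lookup p k)"
  by transfer (auto simp: when_def)

lemma of_int_Sum_any: "(of_int (Sum_any g) :: 'b::ring_char_0) = Sum_any (\<lambda>a. of_int (g a))"
  by (simp add: Sum_any.expand_set)

lemma map_of_int_add:
  "Poly_Mapping.map (of_int :: int \<Rightarrow> 'b::ring_1) (p + q)
     = Poly_Mapping.map of_int p + Poly_Mapping.map of_int q"
  by transfer (auto simp: when_def fun_eq_iff simp flip: of_int_add)

lemma map_of_int_uminus:
  "Poly_Mapping.map (of_int :: int \<Rightarrow> 'b::ring_1) (- p) = - Poly_Mapping.map of_int p"
  by transfer (auto simp: when_def fun_eq_iff)

lemma map_of_int_one:
  "Poly_Mapping.map (of_int :: int \<Rightarrow> 'b::ring_1) (1 :: 'a::comm_monoid_add \<Rightarrow>\<^sub>0 int) = 1"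
  by transfer (auto simp: when_def fun_eq_iff)

lemma map_of_int_mult:
  "Poly_Mapping.map (of_int :: int \<Rightarrow> 'b::{comm_ring_1,ring_char_0}) (p * q)
     = Poly_Mapping.map of_int p * Poly_Mapping.map of_int (q :: 'a::comm_monoid_add \<Rightarrow>\<^sub>0 int)"
  by (rule poly_mapping_eqI)
    (simp add: lookup_map_of_int lookup_mult of_int_Sum_any when_def if_distrib cong: if_cong)

lemma zpoly_to_K_add: "zpoly_to_K (p + q) = zpoly_to_K p + zpoly_to_K q"
  by (simp add: zpoly_to_K_def map_of_int_add)

lemma zpoly_to_K_uminus: "zpoly_to_K (- p) = - zpoly_to_K p"
  by (simp add: zpoly_to_K_def map_of_int_uminus)

lemma zpoly_to_K_one: "zpoly_to_K 1 = 1"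
  by (simp add: zpoly_to_K_def map_of_int_one One_fract_def)

lemma zpoly_to_K_mult: "zpoly_to_K (p * q) = zpoly_to_K p * zpoly_to_K q"
  by (simp add: zpoly_to_K_def map_of_int_mult)

lemma zpoly_to_K_prod: "zpoly_to_K (prod f A) = (\<Prod>a\<in>A. zpoly_to_K (f a))"
  by (induction A rule: infinite_finite_induct) (auto simp: zpoly_to_K_one zpoly_to_K_mult)

lemma zpoly_to_K_power: "zpoly_to_K (p ^ n) = zpoly_to_K p ^ n"
  by (induction n) (auto simp: zpoly_to_K_one zpoly_to_K_mult)

definition var_monom :: "var \<Rightarrow> zpoly" where
  "var_monom v = Poly_Mapping.single (Poly_Mapping.single v 1) 1"

lemma zpoly_to_K_var_monom: "zpoly_to_K (var_monom v) = Var v"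
  by (simp add: zpoly_to_K_def var_monom_def Var_def)

lemma Var_nonzero: "Var v \<noteq> 0"
proof -
  have "Poly_Mapping.single (Poly_Mapping.single v (1::nat)) (1::rat) \<noteq> 0"
    by (metis lookup_single_eq lookup_zero zero_neq_one)
  then show ?thesis by (simp add: Var_def Zero_fract_def eq_fract)
qed

definition allowed_polys :: "nat \<Rightarrow> zpoly set" where
  "allowed_polys N = {P. \<forall>\<mu> \<in> Poly_Mapping.keys P. Poly_Mapping.keys \<mu> \<subseteq> allowed_vars N}"

lemma allowed_polys_add: "p \<in> allowed_polys N \<Longrightarrow> q \<in> allowed_polys N \<Longrightarrow> p + q \<in> allowed_polys N"
  unfolding allowed_polys_def using keys_add[of p q] by blast

lemma allowed_polys_uminus: "p \<in> allowed_polys N \<Longrightarrow> - p \<in> allowed_polys N"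
  unfolding allowed_polys_def by simp

lemma allowed_polys_one: "1 \<in> allowed_polys N"
  unfolding allowed_polys_def by simp

lemma allowed_polys_mult:
  assumes "p \<in> allowed_polys N" "q \<in> allowed_polys N"
  shows "p * q \<in> allowed_polys N"
  unfolding allowed_polys_def
proof (intro CollectI ballI)
  fix \<mu> assume "\<mu> \<in> Poly_Mapping.keys (p * q)"
  then obtain a b where "\<mu> = a + b" "a \<in> Poly_Mapping.keys p" "b \<in> Poly_Mapping.keys q"
    using keys_mult by blast
  then show "Poly_Mapping.keys \<mu> \<subseteq> allowed_vars N"
    using assms keys_add[of a b] unfolding allowed_polys_def by blast
qed

lemma allowed_polys_prod:
  "(\<And>a. a \<in> A \<Longrightarrow> f a \<in> allowed_polys N) \<Longrightarrow> prod f A \<in> allowed_polys N"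
  by (induction A rule: infinite_finite_induct) (auto simp: allowed_polys_one allowed_polys_mult)

lemma allowed_polys_power: "p \<in> allowed_polys N \<Longrightarrow> p ^ n \<in> allowed_polys N"
  by (induction n) (auto simp: allowed_polys_one allowed_polys_mult)

lemma allowed_polys_var_monom: "v \<in> allowed_vars N \<Longrightarrow> var_monom v \<in> allowed_polys N"
  unfolding allowed_polys_def var_monom_def by simp

definition x_monomial :: "nat \<Rightarrow> (nat \<Rightarrow> nat) \<Rightarrow> K" where
  "x_monomial N m = (\<Prod>i\<in>{1..N}. Var (xv i) ^ m i)"

lemma x_monomial_nonzero: "x_monomial N m \<noteq> 0"
  unfolding x_monomial_def by (simp add: Var_nonzero)

lemma x_monomial_add: "x_monomial N (\<lambda>i. m i + m' i) = x_monomial N m * x_monomial N m'"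
  unfolding x_monomial_def by (simp add: power_add prod.distrib)

lemma x_monomial_allowed: "\<exists>Q \<in> allowed_polys N. x_monomial N m = zpoly_to_K Q"
proof
  show "(\<Prod>i\<in>{1..N}. var_monom (xv i) ^ m i) \<in> allowed_polys N"
    by (intro allowed_polys_prod allowed_polys_power allowed_polys_var_monom)
      (auto simp: allowed_vars_def)
  show "x_monomial N m = zpoly_to_K (\<Prod>i\<in>{1..N}. var_monom (xv i) ^ m i)"
    by (simp add: x_monomial_def zpoly_to_K_prod zpoly_to_K_power zpoly_to_K_var_monom)
qed

lemma is_int_laurent_iff:
  "is_int_laurent N c \<longleftrightarrow> (\<exists>P \<in> allowed_polys N. \<exists>m. c = zpoly_to_K P / x_monomial N m)"
  unfolding is_int_laurent_def allowed_polys_def x_monomial_def by blast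

lemma int_laurent_poly: "P \<in> allowed_polys N \<Longrightarrow> is_int_laurent N (zpoly_to_K P)"
  unfolding is_int_laurent_iff by (auto intro!: exI[of _ "\<lambda>_. 0"] simp: x_monomial_def)

lemma int_laurent_add:
  assumes "is_int_laurent N c" "is_int_laurent N c'"
  shows "is_int_laurent N (c + c')"
proof -
  obtain P m P' m' where P: "P \<in> allowed_polys N" "c = zpoly_to_K P / x_monomial N m"
    and P': "P' \<in> allowed_polys N" "c' = zpoly_to_K P' / x_monomial N m'"
    using assms unfolding is_int_laurent_iff by blast
  obtain Q Q' where Q: "Q \<in> allowed_polys N" "x_monomial N m = zpoly_to_K Q"
    and Q': "Q' \<in> allowed_polys N" "x_monomial N m' = zpoly_to_K Q'"
    using x_monomial_allowed by metis
  have "c + c' = (zpoly_to_K P * x_monomial N m' + zpoly_to_K P' * x_monomial N m)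
                   / (x_monomial N m * x_monomial N m')"
    using P P' by (simp add: add_frac_eq x_monomial_nonzero)
  also have "\<dots> = zpoly_to_K (P * Q' + P' * Q) / x_monomial N (\<lambda>i. m i + m' i)"
    by (simp add: Q Q' zpoly_to_K_add zpoly_to_K_mult x_monomial_add)
  finally show ?thesis
    unfolding is_int_laurent_iff
    using P P' Q Q' by (blast intro: allowed_polys_add allowed_polys_mult)
qed

lemma int_laurent_mult:
  assumes "is_int_laurent N c" "is_int_laurent N c'"
  shows "is_int_laurent N (c * c')"
proof -
  obtain P m P' m' where P: "P \<in> allowed_polys N" "c = zpoly_to_K P / x_monomial N m"
    and P': "P' \<in> allowed_polys N" "c' = zpoly_to_K P' / x_monomial N m'"
    using assms unfolding is_int_laurent_iff by blast
  have "c * c' = zpoly_to_K (P * P') / x_monomial N (\<lambda>i. m i + m' i)"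
    using P P' by (simp add: zpoly_to_K_mult x_monomial_add)
  then show ?thesis
    unfolding is_int_laurent_iff using P P' by (blast intro: allowed_polys_mult)
qed

lemma int_laurent_uminus:
  assumes "is_int_laurent N c"
  shows "is_int_laurent N (- c)"
proof -
  obtain P m where P: "P \<in> allowed_polys N" "c = zpoly_to_K P / x_monomial N m"
    using assms unfolding is_int_laurent_iff by blast
  have "- c = zpoly_to_K (- P) / x_monomial N m"
    using P by (simp add: zpoly_to_K_uminus)
  then show ?thesis
    unfolding is_int_laurent_iff using P by (blast intro: allowed_polys_uminus)
qed

lemma int_laurent_divide_x_monomial:
  assumes "is_int_laurent N c"
  shows "is_int_laurent N (c / x_monomial N m')"
proof -
  obtain P m where P: "P \<in> allowed_polys N" "c = zpoly_to_K P / x_monomial N m"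
    using assms unfolding is_int_laurent_iff by blast
  have "c / x_monomial N m' = zpoly_to_K P / x_monomial N (\<lambda>i. m i + m' i)"
    using P by (simp add: x_monomial_add)
  then show ?thesis
    unfolding is_int_laurent_iff using P by blast
qed

lemma int_laurent_one: "is_int_laurent N 1"
  using int_laurent_poly[OF allowed_polys_one] by (simp add: zpoly_to_K_one)

lemma int_laurent_zero: "is_int_laurent N 0"
  using int_laurent_add[OF int_laurent_one int_laurent_uminus[OF int_laurent_one]] by simp

lemma int_laurent_sum:
  "(\<And>a. a \<in> A \<Longrightarrow> is_int_laurent N (f a)) \<Longrightarrow> is_int_laurent N (sum f A)"
  by (induction A rule: infinite_finite_induct) (auto simp: int_laurent_zero int_laurent_add)

lemma int_laurent_prod:
  "(\<And>a. a \<in> A \<Longrightarrow> is_int_laurent N (f a)) \<Longrightarrow> is_int_laurent N (prod f A)"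
  by (induction A rule: infinite_finite_induct) (auto simp: int_laurent_one int_laurent_mult)

lemma int_laurent_power: "is_int_laurent N c \<Longrightarrow> is_int_laurent N (c ^ n)"
  by (induction n) (auto simp: int_laurent_one int_laurent_mult)

lemma int_laurent_Var: "v \<in> allowed_vars N \<Longrightarrow> is_int_laurent N (Var v)"
  using int_laurent_poly[OF allowed_polys_var_monom] zpoly_to_K_var_monom by metis

lemma int_laurent_generic_point: "i \<in> {1..N} \<Longrightarrow> is_int_laurent N (generic_point i)"
  unfolding generic_point_def by (rule int_laurent_Var) (auto simp: allowed_vars_def)

lemma int_laurent_Var_av: "I \<subset> {1..N} \<Longrightarrow> is_int_laurent N (Var (av I))"
  by (rule int_laurent_Var) (auto simp: allowed_vars_def)

definition markoff_lower :: "nat \<Rightarrow> (nat \<Rightarrow> K) \<Rightarrow> K" where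
  "markoff_lower N y = (\<Sum>i\<in>{1..N}. y i ^ 2)
     + (\<Sum>I\<in>Pow {1..N} - {{1..N}}. Var (av I) * (\<Prod>i\<in>I. y i))"

definition markoff_top_coeff :: "nat \<Rightarrow> K" where
  "markoff_top_coeff N = - markoff_lower N generic_point / (\<Prod>i\<in>{1..N}. generic_point i)"

definition markoff_form :: "nat \<Rightarrow> (nat \<Rightarrow> K) \<Rightarrow> K" where
  "markoff_form N y = markoff_lower N y + markoff_top_coeff N * (\<Prod>i\<in>{1..N}. y i)"

definition markoff_lin_coeff :: "nat \<Rightarrow> nat \<Rightarrow> (nat \<Rightarrow> K) \<Rightarrow> K" where
  "markoff_lin_coeff N k y =
     (\<Sum>I\<in>{I\<in>Pow {1..N}. k \<in> I \<and> I \<noteq> {1..N}}. Var (av I) * (\<Prod>i\<in>I - {k}. y i))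
     + markoff_top_coeff N * (\<Prod>i\<in>{1..N} - {k}. y i)"

definition markoff_const_coeff :: "nat \<Rightarrow> nat \<Rightarrow> (nat \<Rightarrow> K) \<Rightarrow> K" where
  "markoff_const_coeff N k y = (\<Sum>i\<in>{1..N} - {k}. y i ^ 2)
     + (\<Sum>I\<in>Pow ({1..N} - {k}). Var (av I) * (\<Prod>i\<in>I. y i))"

lemma E_eq_const_coeff: "E N k y = y(k := markoff_const_coeff N k y / y k)"
  by (simp add: E_def markoff_const_coeff_def)

lemma markoff_form_generic_point: "markoff_form N generic_point = 0"
  by (simp add: markoff_form_def markoff_top_coeff_def generic_point_def Var_nonzero)

lemma int_laurent_markoff_top_coeff: "is_int_laurent N (markoff_top_coeff N)"
proof -
  have "(\<Prod>i\<in>{1..N}. generic_point i) = x_monomial N (\<lambda>_. 1)"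
    by (simp add: x_monomial_def generic_point_def)
  moreover have "is_int_laurent N (markoff_lower N generic_point)"
    unfolding markoff_lower_def
    by (intro int_laurent_add int_laurent_sum int_laurent_mult int_laurent_power int_laurent_prod
        int_laurent_generic_point int_laurent_Var_av) auto
  ultimately show ?thesis
    unfolding markoff_top_coeff_def by (simp add: int_laurent_divide_x_monomial int_laurent_uminus)
qed

lemma int_laurent_markoff_lin_coeff:
  assumes "\<forall>i\<in>{1..N}. is_int_laurent N (y i)"
  shows "is_int_laurent N (markoff_lin_coeff N k y)"
  unfolding markoff_lin_coeff_def using assms
  by (intro int_laurent_add int_laurent_sum int_laurent_mult int_laurent_prod int_laurent_Var_av
      int_laurent_markoff_top_coeff) auto

lemma markoff_form_quadratic_in:
  assumes k: "k \<in> {1..N}"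
  shows "markoff_form N y = (y k)\<^sup>2 + markoff_lin_coeff N k y * y k + markoff_const_coeff N k y"
proof -
  define without_k where "without_k = Pow ({1..N} - {k})"
  define with_k where "with_k = {I\<in>Pow {1..N}. k \<in> I \<and> I \<noteq> {1..N}}"
  have partition: "Pow {1..N} - {{1..N}} = without_k \<union> with_k" "without_k \<inter> with_k = {}"
    using k unfolding without_k_def with_k_def by auto
  have "finite without_k" "finite with_k"
    unfolding without_k_def with_k_def by auto
  then have sum_split: "(\<Sum>I\<in>Pow {1..N} - {{1..N}}. Var (av I) * (\<Prod>i\<in>I. y i))
     = (\<Sum>I\<in>without_k. Var (av I) * (\<Prod>i\<in>I. y i)) + (\<Sum>I\<in>with_k. Var (av I) * (\<Prod>i\<in>I. y i))"
    unfolding partition by (simp add: sum.union_disjoint partition)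
  have factor_k: "(\<Sum>I\<in>with_k. Var (av I) * (\<Prod>i\<in>I. y i))
     = (\<Sum>I\<in>with_k. Var (av I) * (\<Prod>i\<in>I - {k}. y i)) * y k"
    unfolding sum_distrib_right
  proof (rule sum.cong)
    fix I assume "I \<in> with_k"
    then have "finite I" "k \<in> I" unfolding with_k_def by (auto intro: finite_subset)
    then show "Var (av I) * (\<Prod>i\<in>I. y i) = Var (av I) * (\<Prod>i\<in>I - {k}. y i) * y k"
      by (simp add: prod.remove mult_ac)
  qed simp
  show ?thesis
    using k
    unfolding markoff_form_def markoff_lower_def sum_split factor_k markoff_lin_coeff_def
      markoff_const_coeff_def with_k_def[symmetric] without_k_def[symmetric]
    by (simp add: sum.remove prod.remove algebra_simps power2_eq_square)
qed

lemma markoff_lin_coeff_fun_upd: "markoff_lin_coeff N k (y(k := v)) = markoff_lin_coeff N k y"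
  unfolding markoff_lin_coeff_def
  by (intro arg_cong2[where f = "(+)"] arg_cong2[where f = "(*)"] sum.cong prod.cong refl) auto

lemma markoff_const_coeff_fun_upd: "markoff_const_coeff N k (y(k := v)) = markoff_const_coeff N k y"
  unfolding markoff_const_coeff_def
  by (intro arg_cong2[where f = "(+)"] arg_cong2[where f = "(*)"] sum.cong prod.cong refl) auto

lemma vieta_other_root:
  fixes y l c :: "'a::field"
  assumes root: "y\<^sup>2 + l * y + c = 0" and "y \<noteq> 0"
  shows "c / y = - y - l" and "(c / y)\<^sup>2 + l * (c / y) + c = 0"
proof -
  from root have "c = (- y - l) * y" unfolding power2_eq_square by algebra
  with \<open>y \<noteq> 0\<close> show other: "c / y = - y - l" by simp
  have "(- y - l)\<^sup>2 + l * (- y - l) + c = y\<^sup>2 + l * y + c"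
    unfolding power2_eq_square by algebra
  with root show "(c / y)\<^sup>2 + l * (c / y) + c = 0" by (simp only: other)
qed

lemma E_preserves_laurent_point_on_surface:
  assumes k: "k \<in> {1..N}" and on_surface: "markoff_form N y = 0"
    and laurent: "\<forall>i\<in>{1..N}. is_int_laurent N (y i)"
  shows "markoff_form N (E N k y) = 0 \<and> (\<forall>i\<in>{1..N}. is_int_laurent N (E N k y i))"
proof (cases "y k = 0")
  case True
  then have "E N k y = y" by (simp add: E_def fun_upd_idem)
  with on_surface laurent show ?thesis by simp
next
  case False
  define l where "l = markoff_lin_coeff N k y"
  define c where "c = markoff_const_coeff N k y"
  have root: "(y k)\<^sup>2 + l * y k + c = 0"
    using on_surface markoff_form_quadratic_in[OF k, of y] by (simp add: l_def c_def)
  have E_upd: "E N k y = y(k := c / y k)"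
    by (simp add: E_eq_const_coeff c_def)
  have "markoff_form N (E N k y) = (c / y k)\<^sup>2 + l * (c / y k) + c"
    unfolding E_upd markoff_form_quadratic_in[OF k]
    by (simp add: markoff_lin_coeff_fun_upd markoff_const_coeff_fun_upd l_def c_def)
  also have "\<dots> = 0" using vieta_other_root(2)[OF root False] .
  finally have "markoff_form N (E N k y) = 0" .
  moreover have "is_int_laurent N (c / y k)"
    using laurent k int_laurent_markoff_lin_coeff[OF laurent, of k]
    unfolding vieta_other_root(1)[OF root False] l_def diff_conv_add_uminus
    by (intro int_laurent_add int_laurent_uminus) auto
  ultimately show ?thesis using laurent by (simp add: E_upd)
qed

theorem proposition11:
  fixes N :: nat and ks :: "nat list"
  assumes "N \<ge> 2" and "set ks \<subseteq> {1..N}"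
  shows "\<forall>j\<in>{1..N}. is_int_laurent N (act N ks generic_point j)"
proof -
  have "markoff_form N (act N ks generic_point) = 0
        \<and> (\<forall>j\<in>{1..N}. is_int_laurent N (act N ks generic_point j))"
    using assms(2)
  proof (induction ks)
    case Nil
    then show ?case
      by (simp add: act_def markoff_form_generic_point int_laurent_generic_point)
  next
    case (Cons k ks)
    then show ?case
      using E_preserves_laurent_point_on_surface[of k N "act N ks generic_point"]
      by (simp add: act_def)
  qed
  then show ?thesis by blast
qed

end
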